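(* Let $x=(x_1,\dots,x_n)$ and $y=(y_1,\dots,y_n)$ be indeterminates, and let $\phi:\mathbb{R}(y)\to\mathbb{R}(x)$ and $\psi:\mathbb{R}(x)\to\mathbb{R}(y)$ be mutually inverse $\mathbb{R}$-algebra isomorphisms of rational function fields (an invertible rational change of variables, $\phi(y_j)=\phi_j(x)$, $\psi(x_i)=\psi_i(y)$). For an integer matrix $A\in M_{r\times n}(\mathbb{Z})$ and $\lambda\in\mathbb{T}^r$, write $(\lambda\star f)(x)=f(\lambda^A*x)$ for $f\in\mathbb{R}(x)$. Say $A$ is dimensionally consistent with $\phi$ if for every $j$ there is $\beta_j\in\mathbb{Z}^r$ with $\lambda\star\phi(y_j)=\lambda^{\beta_j}\phi(y_j)$ for all $\lambda\in\mathbb{T}^r$; define analogously, for $B\in M_{r'\times n}(\mathbb{Z})$ acting on $\mathbb{R}(y)$ by $(\mu\bullet g)(y)=g(\mu^B*y)$, when $B$ is dimensionally consistent with $\psi$ (each $\psi(x_i)$ is scaled by a monomial character of $\mu$). Then: (1) The maximum of $\operatorname{rank}A$ over all integer matrices $A$ (with $n$ columns) dimensionally consistent with $\phi$ equals the maximum of $\operatorname{rank}B$ over all integer matrices $B$ dimensionally consistent with $\psi$. (2) Let $F_1,\dots,F_s\in\mathbb{R}(x)$ and $H_l=\psi(F_l)\in\mathbb{R}(y)$. Then the maximum of $\operatorname{rank}A$ over all $A$ dimensionally consistent with $\phi$ and fixing every $F_l$ (i.e. $\lambda\star F_l=F_l$ for all $\lambda,l$) equals the maximum of $\operatorname{rank}B$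 over all $B$ dimensionally consistent with $\psi$ and fixing every $H_l$. Consequently (Theorem on changes of variables): if two ODE systems are linked by an invertible rational change of variables, the maximal scaling symmetry of each system that also makes the change of variables dimensionally consistent has the same rank for both systems.
   Context: $\mathbb{T}^r$ is the group $(\mathbb{R}\setminus\{0\})^r$ under componentwise multiplication. For $a\in\mathbb{Z}^r$, $\lambda^a=\prod_k\lambda_k^{a_k}$; for a matrix $A$ with columns $A_1,\dots,A_n$, $\lambda^A=(\lambda^{A_1},\dots,\lambda^{A_n})$ and $\lambda^A*x=(\lambda^{A_1}x_1,\dots,\lambda^{A_n}x_n)$. The rank of a scaling matrix is the dimension of the scaling action. For an ODE system written as $\frac{dz}{dt}=\frac{z*F(t,z,c)}{t}$ with all quantities (time, dependent variables, parameters) listed as $x_1,\dots,x_n$, a scaling matrix is a scaling symmetry exactly when it fixes the rational functions $F_l$; the second system is obtained by rewriting the $F_l$ in the new quantities, i.e. as $H_l=\psi(F_l)$. *)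

theory Defs
  imports "HOL-Analysis.Analysis" "HOL-Library.Poly_Mapping" "HOL-Computational_Algebra.Fraction_Field"
begin

text \<open>Polynomials in the indeterminates indexed by the finite type 'n (n = CARD('n)),
  represented as finitely supported maps from monomials (exponent vectors) to coefficients.\<close>
type_synonym 'n mpoly = "('n \<Rightarrow>\<^sub>0 nat) \<Rightarrow>\<^sub>0 real"

type_synonym 'n ratfun = "'n mpoly fract"

definition rvar :: "'n::{finite,linorder} \<Rightarrow> 'n ratfun" where
  "rvar i = Fract (Poly_Mapping.single (Poly_Mapping.single i 1) 1) 1"

definition rconst :: "real \<Rightarrow> 'n::{finite,linorder} ratfun" where
  "rconst c = Fract (Poly_Mapping.single 0 c) 1"

definition ralg_hom :: "('n::{finite,linorder} ratfun \<Rightarrow> 'n ratfun) \<Rightarrow> bool" where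
  "ralg_hom h \<longleftrightarrow> (\<forall>f g. h (f + g) = h f + h g) \<and> (\<forall>f g. h (f * g) = h f * h g)
     \<and> h 1 = 1 \<and> (\<forall>c. h (rconst c) = rconst c)"

text \<open>lambda in T^r (only the first r coordinates matter).\<close>
definition torus :: "nat \<Rightarrow> (nat \<Rightarrow> real) set" where
  "torus r = {lam. \<forall>k<r. lam k \<noteq> 0}"

definition mchar :: "nat \<Rightarrow> (nat \<Rightarrow> real) \<Rightarrow> (nat \<Rightarrow> int) \<Rightarrow> real" where
  "mchar r lam a = (\<Prod>k<r. lam k powi a k)"

text \<open>An r x n integer matrix A is given by r and its entries A k i (k < r); column i is (\<lambda>k. A k i).\<close>
definition scale_poly :: "nat \<Rightarrow> (nat \<Rightarrow> 'n::{finite,linorder} \<Rightarrow> int) \<Rightarrow> (nat \<Rightarrow> real) \<Rightarrow> 'n mpoly \<Rightarrow> 'n mpoly" where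
  "scale_poly r A lam p =
     Poly_Mapping.mapp (\<lambda>m c. c * (\<Prod>i\<in>UNIV. (mchar r lam (\<lambda>k. A k i)) ^ (Poly_Mapping.lookup m i))) p"

text \<open>(lambda \<star> f)(x) = f(lambda^A * x) for a rational function f.\<close>
definition scale :: "nat \<Rightarrow> (nat \<Rightarrow> 'n::{finite,linorder} \<Rightarrow> int) \<Rightarrow> (nat \<Rightarrow> real) \<Rightarrow> 'n ratfun \<Rightarrow> 'n ratfun" where
  "scale r A lam f = (THE g. \<exists>a b. b \<noteq> 0 \<and> f = Fract a b \<and> g = Fract (scale_poly r A lam a) (scale_poly r A lam b))"

definition dim_consistent :: "nat \<Rightarrow> (nat \<Rightarrow> 'n::{finite,linorder} \<Rightarrow> int) \<Rightarrow> ('n ratfun \<Rightarrow> 'n ratfun) \<Rightarrow> bool" where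
  "dim_consistent r A h \<longleftrightarrow>
     (\<forall>j. \<exists>beta::nat \<Rightarrow> int. \<forall>lam\<in>torus r.
        scale r A lam (h (rvar j)) = rconst (mchar r lam beta) * h (rvar j))"

definition fixes_all :: "nat \<Rightarrow> (nat \<Rightarrow> 'n::{finite,linorder} \<Rightarrow> int) \<Rightarrow> nat \<Rightarrow> (nat \<Rightarrow> 'n ratfun) \<Rightarrow> bool" where
  "fixes_all r A s F \<longleftrightarrow> (\<forall>lam\<in>torus r. \<forall>l<s. scale r A lam (F l) = F l)"

definition mrank :: "nat \<Rightarrow> (nat \<Rightarrow> 'n::finite \<Rightarrow> int) \<Rightarrow> nat" where
  "mrank r A = dim {(\<chi> i. real_of_int (A k i)) :: real^'n | k. k < r}"

end

(*
  Suppose A is dimensionally consistent with phi, scaling phi(y_j) by the character lambda^(beta_j),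
  and let B be the matrix whose j-th column is beta_j.  Scaling by A after phi equals phi after
  scaling by B, since both are R-algebra homomorphisms agreeing on the variables.  Conjugating by
  psi = phi^-1, scaling by B after psi equals psi after scaling by A.  Hence B is dimensionally
  consistent with psi (psi(x_i) is scaled by the character of the i-th column of A), B fixes psi(F_l)
  whenever A fixes F_l, and every linear relation t among the rows of B is one among the rows of A:
  for lambda = exp o t scaling by B is the identity, hence so is scaling by A.  Thus
  rank A <= rank B; by symmetry the two maxima agree, and part (1) is part (2) with s = 0.
*)
theory Submission
  imports Defs
begin

section \<open>Rescaling the variables of a polynomial\<close>

lemma poly_mapping_add_induct [case_names zero single add]:
  fixes p :: "'a \<Rightarrow>\<^sub>0 'b::comm_monoid_add"
  assumes "P 0" and "\<And>m c. P (Poly_Mapping.single m c)"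
    and "\<And>p q. P p \<Longrightarrow> P q \<Longrightarrow> P (p + q)"
  shows "P p"
proof (induction p rule: update_induct)
  case const
  show ?case by (rule assms(1))
next
  case (update f a b)
  have "Poly_Mapping.update a b f = f + Poly_Mapping.single a b"
    using update.hyps(1)
    by (intro poly_mapping_eqI) (auto simp: lookup_update lookup_add lookup_single in_keys_iff when_def)
  then show ?case using update.IH assms(2,3) by simp
qed

lemma sum_single_lookup:
  "(\<Sum>i\<in>UNIV. Poly_Mapping.single i (Poly_Mapping.lookup m i)) = (m :: 'n::finite \<Rightarrow>\<^sub>0 'b::comm_monoid_add)"
  by (rule poly_mapping_eqI) (simp add: lookup_sum lookup_single when_def)

lemma single_var_power:
  "Poly_Mapping.single (Poly_Mapping.single i 1) (1::'b::comm_semiring_1) ^ e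
     = Poly_Mapping.single (Poly_Mapping.single i e) 1"
  by (induction e) (simp_all add: mult_single flip: single_add)

lemma prod_single_one:
  "(\<Prod>i\<in>I. Poly_Mapping.single (f i) (1::'b::comm_semiring_1)) = Poly_Mapping.single (\<Sum>i\<in>I. f i) 1"
  by (induction I rule: infinite_finite_induct) (simp_all add: mult_single)

lemma monomial_eq_prod_vars:
  fixes m :: "'n::finite \<Rightarrow>\<^sub>0 nat"
  shows "Poly_Mapping.single m (1::'b::comm_semiring_1)
    = (\<Prod>i\<in>UNIV. Poly_Mapping.single (Poly_Mapping.single i 1) 1 ^ Poly_Mapping.lookup m i)"
  by (simp only: single_var_power prod_single_one sum_single_lookup)

definition monom_weight :: "('n::finite \<Rightarrow> 'a::comm_monoid_mult) \<Rightarrow> ('n \<Rightarrow>\<^sub>0 nat) \<Rightarrow> 'a" where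
  "monom_weight w m = (\<Prod>i\<in>UNIV. w i ^ Poly_Mapping.lookup m i)"

definition rescale_vars ::
    "('n::finite \<Rightarrow> 'a::comm_semiring_1) \<Rightarrow> (('n \<Rightarrow>\<^sub>0 nat) \<Rightarrow>\<^sub>0 'a) \<Rightarrow> ('n \<Rightarrow>\<^sub>0 nat) \<Rightarrow>\<^sub>0 'a" where
  "rescale_vars w p = Poly_Mapping.mapp (\<lambda>m c. c * monom_weight w m) p"

lemma monom_weight_0 [simp]: "monom_weight w 0 = 1"
  by (simp add: monom_weight_def)

lemma monom_weight_add: "monom_weight w (m + m') = monom_weight w m * monom_weight w m'"
  by (simp add: monom_weight_def lookup_add power_add prod.distrib)

lemma monom_weight_single: "monom_weight w (Poly_Mapping.single i e) = w i ^ e"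
  by (simp add: monom_weight_def lookup_single when_def if_distrib[of "\<lambda>e. _ ^ e"] cong: if_cong)

lemma monom_weight_nonzero:
  "(\<And>i. w i \<noteq> 0) \<Longrightarrow> monom_weight (w :: 'n::finite \<Rightarrow> 'a::idom) m \<noteq> 0"
  by (simp add: monom_weight_def)

lemma lookup_rescale_vars:
  "Poly_Mapping.lookup (rescale_vars w p) m = Poly_Mapping.lookup p m * monom_weight w m"
  by (auto simp: rescale_vars_def lookup_mapp in_keys_iff when_def)

lemma rescale_vars_0 [simp]: "rescale_vars w 0 = 0"
  by (rule poly_mapping_eqI) (simp add: lookup_rescale_vars)

lemma rescale_vars_add: "rescale_vars w (p + q) = rescale_vars w p + rescale_vars w q"
  by (rule poly_mapping_eqI) (simp add: lookup_rescale_vars lookup_add distrib_right)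

lemma rescale_vars_single:
  "rescale_vars w (Poly_Mapping.single m c) = Poly_Mapping.single m (c * monom_weight w m)"
  by (rule poly_mapping_eqI) (simp add: lookup_rescale_vars lookup_single when_def)

lemma rescale_vars_one: "rescale_vars w 1 = 1"
  by (simp add: rescale_vars_single flip: single_one)

lemma rescale_vars_mult: "rescale_vars w (p * q) = rescale_vars w p * rescale_vars w q"
proof (induction p rule: poly_mapping_add_induct)
  case (single m c)
  show ?case
  proof (induction q rule: poly_mapping_add_induct)
    case (single m' c')
    show ?case by (simp add: rescale_vars_single mult_single monom_weight_add mult_ac)
  qed (simp_all add: distrib_left rescale_vars_add)
qed (simp_all add: distrib_right rescale_vars_add)

lemma rescale_vars_eq_0_iff:
  "(\<And>i. w i \<noteq> 0) \<Longrightarrow> rescale_vars (w :: 'n::finite \<Rightarrow> 'a::idom) p = 0 \<longleftrightarrow> p = 0"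
  by (auto simp: poly_mapping_eq_iff fun_eq_iff lookup_rescale_vars monom_weight_nonzero)

section \<open>Homomorphisms of rational function fields\<close>

(* Not simp rules: mult_fract rewrites their right-hand sides back. *)
lemma Fract_mult_1: "Fract (p * q) 1 = Fract p 1 * Fract (q :: 'a::idom) 1"
  by simp

lemma Fract_power_1: "Fract (p ^ n) 1 = Fract (p :: 'a::idom) 1 ^ n"
  by (induction n) (simp_all only: power_0 power_Suc One_fract_def Fract_mult_1)

lemma Fract_prod_1: "Fract (\<Prod>i\<in>I. f i) 1 = (\<Prod>i\<in>I. Fract (f i :: 'a::idom) 1)"
proof (induction I rule: infinite_finite_induct)
  case (insert x I)
  then show ?case by (simp only: prod.insert[OF insert.hyps] Fract_mult_1)
qed (simp_all add: One_fract_def)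

lemma Fract_monomial:
  "Fract (Poly_Mapping.single m c) 1 = rconst c * (\<Prod>i\<in>UNIV. rvar i ^ Poly_Mapping.lookup m i)"
proof -
  have "Poly_Mapping.single m c = Poly_Mapping.single 0 c * Poly_Mapping.single m 1"
    by (simp add: mult_single)
  then show ?thesis
    by (simp only: monomial_eq_prod_vars[of m] Fract_mult_1 Fract_prod_1 Fract_power_1 rconst_def rvar_def)
qed

lemma rconst_1: "rconst 1 = 1"
  by (simp add: rconst_def One_fract_def)

lemma rconst_inject: "rconst c = rconst d \<longleftrightarrow> c = d"
  by (auto simp: rconst_def eq_fract) (metis lookup_single_eq)

lemma rvar_nonzero: "rvar i \<noteq> 0"
  by (simp add: rvar_def Zero_fract_def eq_fract) (metis lookup_single_eq lookup_zero one_neq_zero)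

lemma
  assumes "ralg_hom h"
  shows ralg_hom_add: "h (f + g) = h f + h g"
    and ralg_hom_mult: "h (f * g) = h f * h g"
    and ralg_hom_rconst: "h (rconst c) = rconst c"
  using assms by (simp_all add: ralg_hom_def)

lemma ralg_hom_0: "ralg_hom h \<Longrightarrow> h 0 = 0"
  unfolding ralg_hom_def by (metis add_cancel_right_right add_0)

lemma ralg_hom_power: "ralg_hom h \<Longrightarrow> h (f ^ n) = h f ^ n"
  by (induction n) (simp_all add: ralg_hom_def)

lemma ralg_hom_prod: "ralg_hom h \<Longrightarrow> h (\<Prod>i\<in>I. f i) = (\<Prod>i\<in>I. h (f i))"
  by (induction I rule: infinite_finite_induct) (simp_all add: ralg_hom_def)

lemma ralg_hom_inverse:
  assumes h: "ralg_hom h" shows "h (inverse f) = inverse (h f)"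
proof (cases "f = 0")
  case True
  then show ?thesis using h by (simp add: ralg_hom_0)
next
  case False
  then have "h f * h (inverse f) = 1" using h by (metis ralg_hom_def right_inverse)
  then show ?thesis by (metis inverse_unique)
qed

lemma ralg_hom_id: "ralg_hom id"
  by (simp add: ralg_hom_def)

lemma ralg_hom_comp: "ralg_hom g \<Longrightarrow> ralg_hom h \<Longrightarrow> ralg_hom (g \<circ> h)"
  by (simp add: ralg_hom_def)

lemma ralg_hom_eqI:
  assumes g: "ralg_hom g" and h: "ralg_hom h" and vars: "\<And>i. g (rvar i) = h (rvar i)"
  shows "g = h"
proof
  have poly: "g (Fract p 1) = h (Fract p 1)" for p
  proof (induction p rule: poly_mapping_add_induct)
    case zero
    show ?case using g h by (simp add: ralg_hom_0 flip: Zero_fract_def)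
  next
    case (single m c)
    have "k (Fract (Poly_Mapping.single m c) 1) = rconst c * (\<Prod>i\<in>UNIV. k (rvar i) ^ Poly_Mapping.lookup m i)"
      if k: "ralg_hom k" for k
      by (simp only: Fract_monomial ralg_hom_mult[OF k] ralg_hom_rconst[OF k] ralg_hom_prod[OF k]
          ralg_hom_power[OF k])
    from this[OF g] this[OF h] show ?case by (simp only: vars)
  next
    case (add p q)
    have "Fract (p + q) 1 = Fract p 1 + Fract q 1"
      by simp
    then show ?case
      by (simp only: ralg_hom_add[OF g] ralg_hom_add[OF h] add.IH)
  qed
  fix f
  show "g f = h f"
  proof (cases f)
    case (Fract a b)
    then have f: "f = Fract a 1 * inverse (Fract b 1)"
      by simp
    show ?thesis
      unfolding f by (simp only: ralg_hom_mult[OF g] ralg_hom_mult[OF h] ralg_hom_inverse[OF g]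
          ralg_hom_inverse[OF h] poly)
  qed
qed

section \<open>The scaling action\<close>

lemma scale_poly_eq_rescale_vars: "scale_poly r A lam = rescale_vars (\<lambda>i. mchar r lam (\<lambda>k. A k i))"
  by (simp add: fun_eq_iff scale_poly_def rescale_vars_def monom_weight_def)

lemma mchar_nonzero: "lam \<in> torus r \<Longrightarrow> mchar r lam a \<noteq> 0"
  by (simp add: mchar_def torus_def)

lemma scale_Fract:
  assumes lam: "lam \<in> torus r" and b: "b \<noteq> 0"
  shows "scale r A lam (Fract a b) = Fract (scale_poly r A lam a) (scale_poly r A lam b)"
  unfolding scale_def
proof (rule the_equality)
  let ?sp = "scale_poly r A lam"
  fix g assume "\<exists>a' b'. b' \<noteq> 0 \<and> Fract a b = Fract a' b' \<and> g = Fract (?sp a') (?sp b')"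
  then obtain a' b' where b': "b' \<noteq> 0" and eq: "Fract a b = Fract a' b'" and g: "g = Fract (?sp a') (?sp b')"
    by blast
  have "a * b' = a' * b" using eq b b' by (simp add: eq_fract)
  then have "?sp a * ?sp b' = ?sp a' * ?sp b" by (simp add: scale_poly_eq_rescale_vars flip: rescale_vars_mult)
  then show "g = Fract (?sp a) (?sp b)"
    using g b b' lam by (simp add: eq_fract scale_poly_eq_rescale_vars rescale_vars_eq_0_iff mchar_nonzero)
qed (use b in blast)

lemma ralg_hom_scale:
  assumes lam: "lam \<in> torus r" shows "ralg_hom (scale r A lam)"
proof -
  let ?sp = "scale_poly r A lam"
  have nz: "?sp p = 0 \<longleftrightarrow> p = 0" for p
    using lam by (simp add: scale_poly_eq_rescale_vars rescale_vars_eq_0_iff mchar_nonzero)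
  have hom: "?sp (p * q) = ?sp p * ?sp q" "?sp (p + q) = ?sp p + ?sp q" "?sp 1 = 1"
    "?sp (Poly_Mapping.single 0 c) = Poly_Mapping.single 0 c" for p q c
    by (simp_all add: scale_poly_eq_rescale_vars rescale_vars_mult rescale_vars_add rescale_vars_one
        rescale_vars_single)
  show ?thesis
    unfolding ralg_hom_def
  proof (intro conjI allI)
    fix f g
    show "scale r A lam (f + g) = scale r A lam f + scale r A lam g"
      by (cases f, cases g) (simp add: scale_Fract[OF lam] hom nz)
    show "scale r A lam (f * g) = scale r A lam f * scale r A lam g"
      by (cases f, cases g) (simp add: scale_Fract[OF lam] hom nz)
  next
    show "scale r A lam 1 = 1"
      by (simp add: One_fract_def scale_Fract[OF lam] hom)
    show "scale r A lam (rconst c) = rconst c" for c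
      by (simp add: rconst_def scale_Fract[OF lam] hom)
  qed
qed

lemma scale_rvar:
  assumes "lam \<in> torus r"
  shows "scale r A lam (rvar i) = rconst (mchar r lam (\<lambda>k. A k i)) * rvar i"
  using assms by (simp add: rvar_def rconst_def scale_Fract scale_poly_eq_rescale_vars rescale_vars_single
      rescale_vars_one mult_single monom_weight_single)

lemma scale_eq_id_iff:
  assumes lam: "lam \<in> torus r"
  shows "scale r A lam = id \<longleftrightarrow> (\<forall>i. mchar r lam (\<lambda>k. A k i) = 1)"
proof
  assume "scale r A lam = id"
  then have "scale r A lam (rvar i) = rvar i" for i
    by simp
  then have "rconst (mchar r lam (\<lambda>k. A k i)) * rvar i = rconst 1 * rvar i" for i
    using lam by (simp add: scale_rvar rconst_1)
  then show "\<forall>i. mchar r lam (\<lambda>k. A k i) = 1"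
    by (simp add: rvar_nonzero rconst_inject)
next
  assume "\<forall>i. mchar r lam (\<lambda>k. A k i) = 1"
  then have "scale r A lam (rvar i) = id (rvar i)" for i
    using lam by (simp add: scale_rvar rconst_1)
  then show "scale r A lam = id"
    by (rule ralg_hom_eqI[OF ralg_hom_scale[OF lam] ralg_hom_id])
qed

lemma mchar_exp: "mchar r (\<lambda>k. exp (t k)) a = exp (\<Sum>k<r. t k * of_int (a k))"
  by (simp add: mchar_def exp_power_int exp_sum mult.commute)

lemma exp_in_torus: "(\<lambda>k. exp (t k)) \<in> torus r"
  by (simp add: torus_def)

lemma scale_0_eq_id: "scale 0 A lam = id"
  by (simp add: scale_eq_id_iff torus_def mchar_def)

section \<open>Rank and linear relations among the rows\<close>

lemma span_indexed_family:
  fixes c :: "nat \<Rightarrow> 'a::real_vector"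
  assumes "x \<in> span {c k | k. k < r}"
  shows "\<exists>t. x = (\<Sum>k<r. t k *\<^sub>R c k)"
  using assms
proof (induction rule: span_induct_alt)
  case base
  show ?case by (rule exI[of _ "\<lambda>_. 0"]) simp
next
  case (step a v y)
  obtain k where k: "k < r" "v = c k" using step.hyps(1) by blast
  obtain t where "y = (\<Sum>k<r. t k *\<^sub>R c k)" using step.IH by blast
  moreover have "(\<Sum>j<r. (if j = k then a else 0) *\<^sub>R c j) = a *\<^sub>R v"
    using k by (simp add: if_distrib[of "\<lambda>s. s *\<^sub>R _"] sum.delta cong: if_cong)
  ultimately have "a *\<^sub>R v + y = (\<Sum>j<r. (t j + (if j = k then a else 0)) *\<^sub>R c j)"
    by (simp add: scaleR_add_left sum.distrib)
  then show ?case by (rule exI[of _ "\<lambda>j. t j + (if j = k then a else 0)"])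
qed

lemma dim_le_if_relations_inherited:
  fixes a :: "nat \<Rightarrow> 'a::euclidean_space" and b :: "nat \<Rightarrow> 'b::euclidean_space"
  assumes rel: "\<And>t. (\<Sum>k<r. t k *\<^sub>R b k) = 0 \<Longrightarrow> (\<Sum>k<r. t k *\<^sub>R a k) = 0"
  shows "dim {a k | k. k < r} \<le> dim {b k | k. k < r}"
proof -
  let ?C = "{(b k, a k) | k. k < r}"
  have "inj_on fst (span ?C)"
  proof (subst linear_injective_on_subspace_0[OF linear_fst subspace_span], intro ballI impI)
    fix x assume "x \<in> span ?C" and x0: "fst x = 0"
    then obtain t where x: "x = (\<Sum>k<r. t k *\<^sub>R (b k, a k))"
      using span_indexed_family[of x "\<lambda>k. (b k, a k)"] by blast
    then have "(\<Sum>k<r. t k *\<^sub>R b k) = 0" and "snd x = (\<Sum>k<r. t k *\<^sub>R a k)"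
      using x0 by (simp_all add: fst_sum snd_sum)
    then show "x = 0" using rel x0 by (simp add: prod_eq_iff)
  qed
  then have "dim ?C = dim (fst ` ?C)"
    by (simp add: dim_image_eq[OF linear_fst])
  moreover have "dim (snd ` ?C) \<le> dim ?C"
    by (rule dim_image_le[OF linear_snd])
  moreover have "fst ` ?C = {b k | k. k < r}" and "snd ` ?C = {a k | k. k < r}"
    by (auto simp: image_iff)
  ultimately show ?thesis by simp
qed

lemma mrank_le_if_relations_inherited:
  fixes A :: "nat \<Rightarrow> 'm::finite \<Rightarrow> int" and B :: "nat \<Rightarrow> 'n::finite \<Rightarrow> int"
  assumes "\<And>t :: nat \<Rightarrow> real. (\<forall>i. (\<Sum>k<r. t k * of_int (B k i)) = 0)
      \<Longrightarrow> (\<forall>i. (\<Sum>k<r. t k * of_int (A k i)) = 0)"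
  shows "mrank r A \<le> mrank r B"
  unfolding mrank_def
proof (rule dim_le_if_relations_inherited)
  fix t assume "(\<Sum>k<r. t k *\<^sub>R (\<chi> i. real_of_int (B k i))) = (0 :: real^'n)"
  then have "\<forall>i. (\<Sum>k<r. t k * of_int (B k i)) = 0"
    by (simp add: vec_eq_iff)
  then have "\<forall>i. (\<Sum>k<r. t k * of_int (A k i)) = 0"
    by (rule assms)
  then show "(\<Sum>k<r. t k *\<^sub>R (\<chi> i. real_of_int (A k i))) = (0 :: real^'m)"
    by (simp add: vec_eq_iff)
qed

lemma finite_mrank_set: "finite {mrank r (A :: nat \<Rightarrow> 'n::finite \<Rightarrow> int) | r A. P r A}"
  by (rule finite_subset[of _ "{..CARD('n)}"]) (auto simp: mrank_def dim_subset_UNIV_cart)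

lemma Max_mrank_le_Max_mrank:
  fixes P :: "nat \<Rightarrow> (nat \<Rightarrow> 'm::finite \<Rightarrow> int) \<Rightarrow> bool"
    and Q :: "nat \<Rightarrow> (nat \<Rightarrow> 'n::finite \<Rightarrow> int) \<Rightarrow> bool"
  assumes "P r0 A0" and dominated: "\<And>r A. P r A \<Longrightarrow> \<exists>B. Q r B \<and> mrank r A \<le> mrank r B"
  shows "Max {mrank r A | r A. P r A} \<le> Max {mrank r B | r B. Q r B}"
proof -
  have "mrank r A \<le> Max {mrank r B | r B. Q r B}" if PrA: "P r A" for r A
  proof -
    obtain B where "Q r B" and "mrank r A \<le> mrank r B"
      using dominated[OF PrA] by blast
    then show ?thesis
      using Max_ge[OF finite_mrank_set, of "mrank r B"] by fastforce
  qed
  then show ?thesis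
    using \<open>P r0 A0\<close> by (subst Max_le_iff) (auto simp: finite_mrank_set)
qed

section \<open>Transfer along a change of variables\<close>

lemma scale_comp_eq_of_dim_consistent:
  assumes phi: "ralg_hom phi" and lam: "lam \<in> torus r"
    and beta: "\<And>j. scale r A lam (phi (rvar j)) = rconst (mchar r lam (beta j)) * phi (rvar j)"
  shows "scale r A lam \<circ> phi = phi \<circ> scale r (\<lambda>k j. beta j k) lam"
  by (rule ralg_hom_eqI)
    (simp_all add: ralg_hom_comp ralg_hom_scale phi lam scale_rvar beta ralg_hom_mult ralg_hom_rconst)

lemma intertwining_of_dim_consistent:
  fixes phi psi :: "'n::{finite,linorder} ratfun \<Rightarrow> 'n ratfun"
  assumes phi: "ralg_hom phi" and phi_psi: "\<And>f. phi (psi f) = f" and psi_phi: "\<And>g. psi (phi g) = g"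
    and "dim_consistent r A phi"
  obtains B where "\<And>lam. lam \<in> torus r \<Longrightarrow> scale r B lam \<circ> psi = psi \<circ> scale r A lam"
proof -
  obtain beta where beta: "\<And>j lam. lam \<in> torus r \<Longrightarrow>
      scale r A lam (phi (rvar j)) = rconst (mchar r lam (beta j)) * phi (rvar j)"
    using \<open>dim_consistent r A phi\<close> unfolding dim_consistent_def by metis
  have "scale r A lam \<circ> phi = phi \<circ> scale r (\<lambda>k j. beta j k) lam" if "lam \<in> torus r" for lam
    by (rule scale_comp_eq_of_dim_consistent[OF phi that beta[OF that]])
  then have "scale r (\<lambda>k j. beta j k) lam \<circ> psi = psi \<circ> scale r A lam" if "lam \<in> torus r" for lam
    using that by (simp add: fun_eq_iff) (metis phi_psi psi_phi)
  then show thesis by (rule that)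
qed

lemma dim_consistent_of_intertwining:
  assumes psi: "ralg_hom psi"
    and intertw: "\<And>lam. lam \<in> torus r \<Longrightarrow> scale r B lam \<circ> psi = psi \<circ> scale r A lam"
  shows "dim_consistent r B psi"
  unfolding dim_consistent_def
proof (intro allI exI ballI)
  fix j and lam assume lam: "lam \<in> torus r"
  have "scale r B lam (psi (rvar j)) = psi (scale r A lam (rvar j))"
    using intertw[OF lam] by (simp add: fun_eq_iff)
  then show "scale r B lam (psi (rvar j)) = rconst (mchar r lam (\<lambda>k. A k j)) * psi (rvar j)"
    using psi lam by (simp add: scale_rvar ralg_hom_mult ralg_hom_rconst)
qed

lemma fixes_all_of_intertwining:
  assumes "\<And>lam. lam \<in> torus r \<Longrightarrow> scale r B lam \<circ> psi = psi \<circ> scale r A lam"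
    and "fixes_all r A s F"
  shows "fixes_all r B s (\<lambda>l. psi (F l))"
  using assms by (simp add: fixes_all_def fun_eq_iff)

lemma mrank_le_of_intertwining:
  assumes "inj psi"
    and intertw: "\<And>lam. lam \<in> torus r \<Longrightarrow> scale r B lam \<circ> psi = psi \<circ> scale r A lam"
  shows "mrank r A \<le> mrank r B"
proof (rule mrank_le_if_relations_inherited)
  fix t :: "nat \<Rightarrow> real"
  assume "\<forall>i. (\<Sum>k<r. t k * of_int (B k i)) = 0"
  then have "scale r B (\<lambda>k. exp (t k)) = id"
    by (simp add: scale_eq_id_iff exp_in_torus mchar_exp)
  then have "psi (scale r A (\<lambda>k. exp (t k)) f) = psi f" for f
    using fun_cong[OF intertw[OF exp_in_torus, of t], of f] by simp
  then have "scale r A (\<lambda>k. exp (t k)) = id"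
    using \<open>inj psi\<close> by (simp add: fun_eq_iff inj_eq)
  then show "\<forall>i. (\<Sum>k<r. t k * of_int (A k i)) = 0"
    by (simp add: scale_eq_id_iff exp_in_torus mchar_exp)
qed

lemma dim_consistent_transfer:
  fixes phi psi :: "'n::{finite,linorder} ratfun \<Rightarrow> 'n ratfun"
  assumes "ralg_hom phi" and "ralg_hom psi"
    and phi_psi: "\<And>f. phi (psi f) = f" and psi_phi: "\<And>g. psi (phi g) = g"
    and "dim_consistent r A phi" and "fixes_all r A s F"
  shows "\<exists>B. dim_consistent r B psi \<and> fixes_all r B s (\<lambda>l. psi (F l)) \<and> mrank r A \<le> mrank r B"
proof -
  obtain B where intertw: "\<And>lam. lam \<in> torus r \<Longrightarrow> scale r B lam \<circ> psi = psi \<circ> scale r A lam"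
    using intertwining_of_dim_consistent assms by metis
  have "inj psi"
    by (metis injI phi_psi)
  show ?thesis
    using dim_consistent_of_intertwining fixes_all_of_intertwining mrank_le_of_intertwining
      intertw assms \<open>inj psi\<close> by blast
qed

lemma Max_mrank_dim_consistent_fixing_eq:
  fixes phi psi :: "'n::{finite,linorder} ratfun \<Rightarrow> 'n ratfun"
  assumes "ralg_hom phi" and "ralg_hom psi"
    and phi_psi: "\<And>f. phi (psi f) = f" and psi_phi: "\<And>g. psi (phi g) = g"
  shows "Max {mrank r A | r A. dim_consistent r A phi \<and> fixes_all r A s F}
       = Max {mrank r B | r B. dim_consistent r B psi \<and> fixes_all r B s (\<lambda>l. psi (F l))}"
proof (intro antisym Max_mrank_le_Max_mrank)
  have "dim_consistent 0 A h \<and> fixes_all 0 A s G" for A :: "nat \<Rightarrow> 'n \<Rightarrow> int" and h G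
    by (simp add: dim_consistent_def fixes_all_def scale_0_eq_id mchar_def rconst_1)
  then show "dim_consistent 0 A0 phi \<and> fixes_all 0 A0 s F"
    and "dim_consistent 0 A0 psi \<and> fixes_all 0 A0 s (\<lambda>l. psi (F l))" for A0
    by blast+
  show "\<exists>B. (dim_consistent r B psi \<and> fixes_all r B s (\<lambda>l. psi (F l))) \<and> mrank r A \<le> mrank r B"
    if "dim_consistent r A phi \<and> fixes_all r A s F" for r A
    using dim_consistent_transfer[OF assms] that by blast
  show "\<exists>A. (dim_consistent r A phi \<and> fixes_all r A s F) \<and> mrank r B \<le> mrank r A"
    if "dim_consistent r B psi \<and> fixes_all r B s (\<lambda>l. psi (F l))" for r B
    using dim_consistent_transfer[OF assms(2,1) psi_phi phi_psi, of r B s "\<lambda>l. psi (F l)"] that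
    by (simp add: phi_psi)
qed

theorem mainTheorem6:
  fixes phi psi :: "'n::{finite,linorder} ratfun \<Rightarrow> 'n ratfun"
    and s :: nat and F :: "nat \<Rightarrow> 'n ratfun"
  assumes "ralg_hom phi" and "ralg_hom psi"
    and "\<And>f. phi (psi f) = f" and "\<And>g. psi (phi g) = g"
  shows "(Max {mrank r A | r A. dim_consistent r A phi}
           = Max {mrank r B | r B. dim_consistent r B psi})
       \<and> (Max {mrank r A | r A. dim_consistent r A phi \<and> fixes_all r A s F}
           = Max {mrank r B | r B. dim_consistent r B psi \<and> fixes_all r B s (\<lambda>l. psi (F l))})"
proof
  have "fixes_all r (A :: nat \<Rightarrow> 'n \<Rightarrow> int) 0 G" for r A G
    by (simp add: fixes_all_def)
  then show "Max {mrank r A | r A. dim_consistent r A phi} = Max {mrank r B | r B. dim_consistent r B psi}"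
    using Max_mrank_dim_consistent_fixing_eq[OF assms, of 0 F] by simp
  show "Max {mrank r A | r A. dim_consistent r A phi \<and> fixes_all r A s F}
      = Max {mrank r B | r B. dim_consistent r B psi \<and> fixes_all r B s (\<lambda>l. psi (F l))}"
    by (rule Max_mrank_dim_consistent_fixing_eq[OF assms])
qed

end
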